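(* Let $X$ be a compact Hausdorff space, $\mathcal C=C(X)$, $\alpha\colon X\to X$ continuous, $\delta f=f\circ\alpha$, $A$ a transfer operator for $(\mathcal C,\delta)$. Fix $\mu\in M_\delta(\mathcal C)$, $n\in\mathbb N$ and a partition of unity $D$. Let $(m_k)\subset M(\mathcal C)$ be a sequence with $\sum_{g\in D}\mu[g]\ln\frac{m_k[A^ng]}{\mu[g]}\to\tau_n(\mu,D)$, and let $(m_{k_i})$ be a subsequence for which the limits $C_n(\mu,g,D):=\lim_{i\to\infty}m_{k_i}[A^ng]$ exist for all $g\in D$. If $\tau_n(\mu,D)>-\infty$, then \[ \sup_{m\in M(\mathcal C)}\ \sum_{g\in D,\ \mu[g]>0}\mu[g]\,\frac{m[A^ng]}{C_n(\mu,g,D)}=1. \]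
   Context: A transfer operator for $(\mathcal C,\delta)$ is a positive linear operator $A\colon\mathcal C\to\mathcal C$ with $A((\delta f)g)=f\,Ag$ for all $f,g\in\mathcal C$. $M(\mathcal C)$ is the set of positive linear functionals $m$ on $\mathcal C$ with $m[\mathbf 1]=1$ ($\mathbf 1$ the constant $1$); $M_\delta(\mathcal C)$ those also satisfying $\mu[\delta f]=\mu[f]$ for all $f$. A partition of unity is a finite set $D$ of nonnegative elements of $\mathcal C$ summing to $\mathbf 1$. $\tau_n(\mu,D)=\sup_{m\in M(\mathcal C)}\sum_{g\in D}\mu[g]\ln\frac{m[A^ng]}{\mu[g]}$, where summands with $\mu[g]=0$ are set to $0$ and $\ln0=-\infty$. *)

theory Defs
  imports "HOL-Analysis.Analysis"
begin

definition CX :: "('a::topological_space \<Rightarrow> real) set" where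
  "CX = {f. continuous_on UNIV f}"

definition lin_on_CX :: "(('a::topological_space \<Rightarrow> real) \<Rightarrow> real) \<Rightarrow> bool" where
  "lin_on_CX T \<longleftrightarrow> (\<forall>f\<in>CX. \<forall>g\<in>CX. T (\<lambda>x. f x + g x) = T f + T g)
                   \<and> (\<forall>c. \<forall>f\<in>CX. T (\<lambda>x. c * f x) = c * T f)"

definition lin_op_CX :: "(('a::topological_space \<Rightarrow> real) \<Rightarrow> ('b \<Rightarrow> real)) \<Rightarrow> bool" where
  "lin_op_CX T \<longleftrightarrow> (\<forall>f\<in>CX. \<forall>g\<in>CX. T (\<lambda>x. f x + g x) = (\<lambda>x. T f x + T g x))
                   \<and> (\<forall>c. \<forall>f\<in>CX. T (\<lambda>x. c * f x) = (\<lambda>x. c * T f x))"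

definition transfer_operator ::
  "('a::topological_space \<Rightarrow> 'a) \<Rightarrow> (('a \<Rightarrow> real) \<Rightarrow> ('a \<Rightarrow> real)) \<Rightarrow> bool" where
  "transfer_operator \<alpha> A \<longleftrightarrow>
     (\<forall>f\<in>CX. A f \<in> CX) \<and> lin_op_CX A \<and>
     (\<forall>f\<in>CX. (\<forall>x. f x \<ge> 0) \<longrightarrow> (\<forall>x. A f x \<ge> 0)) \<and>
     (\<forall>f\<in>CX. \<forall>g\<in>CX. A (\<lambda>x. (f \<circ> \<alpha>) x * g x) = (\<lambda>x. f x * A g x))"

definition MC :: "(('a::topological_space \<Rightarrow> real) \<Rightarrow> real) set" where
  "MC = {m. lin_on_CX m \<and> (\<forall>f\<in>CX. (\<forall>x. f x \<ge> 0) \<longrightarrow> m f \<ge> 0) \<and> m (\<lambda>x. 1) = 1}"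

definition MC_delta :: "('a::topological_space \<Rightarrow> 'a) \<Rightarrow> (('a \<Rightarrow> real) \<Rightarrow> real) set" where
  "MC_delta \<alpha> = {\<mu>\<in>MC. \<forall>f\<in>CX. \<mu> (f \<circ> \<alpha>) = \<mu> f}"

definition partition_of_unity :: "('a::topological_space \<Rightarrow> real) set \<Rightarrow> bool" where
  "partition_of_unity D \<longleftrightarrow> finite D \<and> D \<subseteq> CX \<and> (\<forall>g\<in>D. \<forall>x. g x \<ge> 0)
      \<and> (\<forall>x. (\<Sum>g\<in>D. g x) = 1)"

text \<open>The summand mu[g] ln(m[A^n g]/mu[g]), with value 0 if mu[g] = 0 and ln 0 = -infinity.\<close>
definition tau_term :: "real \<Rightarrow> real \<Rightarrow> ereal" where
  "tau_term a b = (if a = 0 then 0 else if b = 0 then -\<infinity> else ereal (a * ln (b / a)))"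

definition tau_sum ::
  "(('a::topological_space \<Rightarrow> real) \<Rightarrow> ('a \<Rightarrow> real)) \<Rightarrow> nat \<Rightarrow> (('a \<Rightarrow> real) \<Rightarrow> real)
    \<Rightarrow> ('a \<Rightarrow> real) set \<Rightarrow> (('a \<Rightarrow> real) \<Rightarrow> real) \<Rightarrow> ereal" where
  "tau_sum A n \<mu> D m = (\<Sum>g\<in>D. tau_term (\<mu> g) (m ((A ^^ n) g)))"

definition tau ::
  "(('a::topological_space \<Rightarrow> real) \<Rightarrow> ('a \<Rightarrow> real)) \<Rightarrow> nat \<Rightarrow> (('a \<Rightarrow> real) \<Rightarrow> real)
    \<Rightarrow> ('a \<Rightarrow> real) set \<Rightarrow> ereal" where
  "tau A n \<mu> D = (SUP m\<in>MC. tau_sum A n \<mu> D m)"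

end

theory Submission
  imports Defs
begin

text \<open>
  The values m[A^n g] are bounded on the compact space, so tau_n(mu, D) is a real number T.
  Along the maximizing subsequence (m_{k_i}) a summand mu[g] ln (m[A^n g] / mu[g]) with mu[g] > 0
  cannot tend to -infinity; hence the limits C_g are positive and T = sum_g mu[g] ln (C_g / mu[g]).
  For m in M(C) the convex combinations (1 - t) m_{k_i} + t m stay in M(C), which in the limit
  gives sum_g mu[g] ln (1 + t (m[A^n g] / C_g - 1)) <= 0 for 0 < t < 1. The derivative at t = 0,
  sum_g mu[g] (m[A^n g] / C_g - 1), is therefore <= 0: this is the upper bound 1, and m_{k_i}
  attains it in the limit. Only mu in M(C) and the positivity of A^n g enter.
\<close>

lemma CX_const [simp]: "(\<lambda>x. c) \<in> CX"
  by (simp add: CX_def)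

lemma CX_add: "f \<in> CX \<Longrightarrow> g \<in> CX \<Longrightarrow> (\<lambda>x. f x + g x) \<in> CX"
  by (simp add: CX_def continuous_on_add)

lemma CX_scale: "f \<in> CX \<Longrightarrow> (\<lambda>x. c * f x) \<in> CX"
  by (simp add: CX_def continuous_on_mult)

lemma CX_sum: "F \<subseteq> CX \<Longrightarrow> (\<lambda>x. \<Sum>g\<in>F. g x) \<in> CX"
  unfolding CX_def by (auto intro!: continuous_on_sum)

lemma CX_bounded_above:
  assumes "compact (UNIV :: 'a::topological_space set)" and "f \<in> CX"
  shows "\<exists>B. \<forall>x::'a. f x \<le> B"
proof -
  have "bounded (range f)"
    using assms by (intro compact_imp_bounded compact_continuous_image) (auto simp: CX_def)
  then show ?thesis
    by (meson abs_le_D1 bounded_real rangeI)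
qed

lemma MC_add: "m \<in> MC \<Longrightarrow> f \<in> CX \<Longrightarrow> g \<in> CX \<Longrightarrow> m (\<lambda>x. f x + g x) = m f + m g"
  by (simp add: MC_def lin_on_CX_def)

lemma MC_scale: "m \<in> MC \<Longrightarrow> f \<in> CX \<Longrightarrow> m (\<lambda>x. c * f x) = c * m f"
  by (simp add: MC_def lin_on_CX_def)

lemma MC_nonneg: "m \<in> MC \<Longrightarrow> f \<in> CX \<Longrightarrow> \<forall>x. 0 \<le> f x \<Longrightarrow> 0 \<le> m f"
  by (simp add: MC_def)

lemma MC_const: "m \<in> MC \<Longrightarrow> m (\<lambda>x. c) = c"
  using MC_scale[of m "\<lambda>x. 1" c] by (simp add: MC_def)

lemma MC_le_bound:
  assumes m: "m \<in> MC" and f: "f \<in> CX" and B: "\<forall>x. f x \<le> B"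
  shows "m f \<le> B"
proof -
  have "0 \<le> m (\<lambda>x. B + (-1) * f x)"
    using B by (intro MC_nonneg[OF m] CX_add CX_scale f CX_const) auto
  also have "\<dots> = B - m f"
    by (subst MC_add[OF m CX_const CX_scale[OF f]], subst MC_scale[OF m f]) (simp add: MC_const[OF m])
  finally show ?thesis by simp
qed

lemma MC_sum:
  assumes "m \<in> MC" "finite F" "F \<subseteq> CX"
  shows "m (\<lambda>x. \<Sum>g\<in>F. g x) = (\<Sum>g\<in>F. m g)"
  using assms(2,3)
proof (induction F rule: finite_induct)
  case empty
  then show ?case using MC_const[OF assms(1)] by simp
next
  case (insert h F)
  then show ?case using MC_add[OF assms(1) _ CX_sum[of F]] by simp
qed

lemma MC_convex_combination:
  assumes "m1 \<in> MC" "m2 \<in> MC" "0 \<le> t" "t \<le> 1"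
  shows "(\<lambda>f. (1 - t) * m1 f + t * m2 f) \<in> MC"
proof -
  have "0 \<le> (1 - t) * m1 f + t * m2 f" if "f \<in> CX" "\<forall>x. 0 \<le> f x" for f
    using assms MC_nonneg[OF assms(1) that] MC_nonneg[OF assms(2) that] by simp
  with assms show ?thesis
    by (auto simp: MC_def lin_on_CX_def algebra_simps)
qed

lemma MC_values_bounded:
  assumes "compact (UNIV :: 'a::topological_space set)" "finite D"
    and "\<forall>g\<in>D. f g \<in> CX \<and> (\<forall>x::'a. 0 \<le> f g x)"
  obtains B where "\<forall>g\<in>D. \<forall>m\<in>MC. 0 \<le> m (f g) \<and> m (f g) \<le> B g"
proof -
  have "\<forall>g\<in>D. \<exists>b. \<forall>m\<in>MC. 0 \<le> m (f g) \<and> m (f g) \<le> b"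
  proof
    fix g assume "g \<in> D"
    then obtain b where "\<forall>x. f g x \<le> b"
      using assms CX_bounded_above by blast
    then show "\<exists>b. \<forall>m\<in>MC. 0 \<le> m (f g) \<and> m (f g) \<le> b"
      using assms \<open>g \<in> D\<close> MC_le_bound MC_nonneg by blast
  qed
  then show ?thesis using that by (metis (no_types))
qed

lemma MC_sum_partition_of_unity:
  assumes "\<mu> \<in> MC" "partition_of_unity D"
  shows "(\<Sum>g\<in>D. \<mu> g) = 1"
proof -
  have "finite D" "D \<subseteq> CX" "(\<lambda>x. \<Sum>g\<in>D. g x) = (\<lambda>x. 1)"
    using assms(2) by (auto simp: partition_of_unity_def)
  then show ?thesis
    using MC_sum[OF assms(1)] MC_const[OF assms(1)] by metis
qed

lemma transfer_operator_funpow: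
  assumes "transfer_operator \<alpha> A" "f \<in> CX"
  shows "(A ^^ n) f \<in> CX" and "\<forall>x. 0 \<le> f x \<Longrightarrow> \<forall>x. 0 \<le> (A ^^ n) f x"
  using assms by (induction n) (simp_all add: transfer_operator_def)

definition log_ratio_sum :: "('i \<Rightarrow> real) \<Rightarrow> 'i set \<Rightarrow> ('i \<Rightarrow> real) \<Rightarrow> ereal" where
  "log_ratio_sum w D v = (\<Sum>g\<in>D. tau_term (w g) (v g))"

lemma tau_sum_eq_log_ratio_sum: "tau_sum A n \<mu> D m = log_ratio_sum \<mu> D (\<lambda>g. m ((A ^^ n) g))"
  by (simp add: tau_sum_def log_ratio_sum_def)

lemma tau_term_le:
  assumes "0 \<le> a" "0 \<le> b" "b \<le> B"
  shows "tau_term a b \<le> ereal (a * ln (B / a))"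
proof (cases "a = 0 \<or> b = 0")
  case True
  then show ?thesis by (auto simp: tau_term_def)
next
  case False
  then have "ln (b / a) \<le> ln (B / a)"
    using assms by (simp add: divide_right_mono)
  then show ?thesis
    using False assms by (simp add: tau_term_def)
qed

lemma tau_term_lower_bound:
  assumes "0 < a" "0 \<le> b" "ereal y \<le> tau_term a b"
  shows "a * exp (y / a) \<le> b"
proof -
  have "b \<noteq> 0" and "y \<le> a * ln (b / a)"
    using assms by (auto simp: tau_term_def split: if_splits)
  then have "y / a \<le> ln (b / a)"
    using assms by (simp add: pos_divide_le_eq mult.commute)
  then have "exp (y / a) \<le> b / a"
    using assms \<open>b \<noteq> 0\<close> ln_ge_iff[of "b / a" "y / a"] by simp
  then show ?thesis
    using assms by (simp add: pos_le_divide_eq mult.commute)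
qed

lemma log_ratio_sum_le:
  assumes "\<forall>g\<in>D. 0 \<le> w g \<and> 0 \<le> v g \<and> v g \<le> B g"
  shows "log_ratio_sum w D v \<le> ereal (\<Sum>g\<in>D. w g * ln (B g / w g))"
proof -
  have "log_ratio_sum w D v \<le> (\<Sum>g\<in>D. ereal (w g * ln (B g / w g)))"
    unfolding log_ratio_sum_def using assms by (intro sum_mono tau_term_le) auto
  then show ?thesis by simp
qed

lemma log_ratio_sum_eq_real:
  assumes "finite D" "\<forall>g\<in>D. 0 \<le> w g" "\<forall>g\<in>D. 0 < w g \<longrightarrow> 0 < v g"
  shows "log_ratio_sum w D v = ereal (\<Sum>g\<in>{g\<in>D. 0 < w g}. w g * ln (v g / w g))"
proof -
  have "log_ratio_sum w D v = (\<Sum>g\<in>D. ereal (if 0 < w g then w g * ln (v g / w g) else 0))"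
    unfolding log_ratio_sum_def
    by (rule sum.cong) (use assms in \<open>auto simp: tau_term_def order.order_iff_strict\<close>)
  also have "\<dots> = ereal (\<Sum>g\<in>{g\<in>D. 0 < w g}. w g * ln (v g / w g))"
    using assms(1) by (simp add: sum.inter_filter)
  finally show ?thesis .
qed

lemma tendsto_log_ratio_sum:
  assumes "finite D" "\<forall>g\<in>D. 0 \<le> w g"
    and "\<forall>g\<in>D. 0 < w g \<longrightarrow> (\<lambda>k. v k g) \<longlonglongrightarrow> u g \<and> 0 < u g"
  shows "(\<lambda>k. log_ratio_sum w D (v k)) \<longlonglongrightarrow> ereal (\<Sum>g\<in>{g\<in>D. 0 < w g}. w g * ln (u g / w g))"
proof -
  let ?Dp = "{g\<in>D. 0 < w g}"
  have "eventually (\<lambda>k. \<forall>g\<in>?Dp. 0 < v k g) sequentially"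
    using assms by (intro eventually_ball_finite) (auto intro: order_tendstoD)
  then have "eventually (\<lambda>k. ereal (\<Sum>g\<in>?Dp. w g * ln (v k g / w g)) = log_ratio_sum w D (v k))
      sequentially"
    by eventually_elim (use assms in \<open>simp add: log_ratio_sum_eq_real\<close>)
  moreover have "(\<lambda>k. \<Sum>g\<in>?Dp. w g * ln (v k g / w g)) \<longlonglongrightarrow> (\<Sum>g\<in>?Dp. w g * ln (u g / w g))"
    using assms by (intro tendsto_intros) auto
  ultimately show ?thesis
    by (blast intro: Lim_transform_eventually)
qed

lemma limit_pos_of_log_ratio_sum_bounded_below:
  assumes "finite D" "g \<in> D" "0 < w g"
    and bounds: "\<forall>k. \<forall>h\<in>D. 0 \<le> w h \<and> 0 \<le> v k h \<and> v k h \<le> B h"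
    and "eventually (\<lambda>k. ereal L < log_ratio_sum w D (v k)) sequentially"
    and "(\<lambda>k. v k g) \<longlonglongrightarrow> c"
  shows "0 < c"
proof -
  define R where "R = (\<Sum>h\<in>D - {g}. w h * ln (B h / w h))"
  have "eventually (\<lambda>k. w g * exp ((L - R) / w g) \<le> v k g) sequentially"
    using assms(5)
  proof eventually_elim
    case (elim k)
    have "log_ratio_sum w D (v k) = tau_term (w g) (v k g) + log_ratio_sum w (D - {g}) (v k)"
      unfolding log_ratio_sum_def using sum.remove[OF assms(1,2)] by simp
    also have "\<dots> \<le> tau_term (w g) (v k g) + ereal R"
      unfolding R_def using bounds by (intro add_left_mono log_ratio_sum_le) auto
    finally have "ereal L < tau_term (w g) (v k g) + ereal R"
      using elim by (rule order.strict_trans2[rotated])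
    then have "ereal (L - R) \<le> tau_term (w g) (v k g)"
      by (cases "tau_term (w g) (v k g)") auto
    then show ?case
      using tau_term_lower_bound assms(2,3) bounds by blast
  qed
  then have "w g * exp ((L - R) / w g) \<le> c"
    using assms(6) by (intro tendsto_lowerbound) auto
  then show ?thesis
    using assms(3) by (smt (verit) exp_gt_zero mult_pos_pos)
qed

lemma tendsto_log_ratio_sum_real_limit:
  assumes "finite D" and bounds: "\<forall>k. \<forall>g\<in>D. 0 \<le> w g \<and> 0 \<le> v k g \<and> v k g \<le> B g"
    and lim_sum: "(\<lambda>k. log_ratio_sum w D (v k)) \<longlonglongrightarrow> \<tau>" and "\<tau> > -\<infinity>"
    and lim: "\<forall>g\<in>D. (\<lambda>k. v k g) \<longlonglongrightarrow> C g"
  shows "\<forall>g\<in>{g\<in>D. 0 < w g}. 0 < C g"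
    and "\<tau> = ereal (\<Sum>g\<in>{g\<in>D. 0 < w g}. w g * ln (C g / w g))"
proof -
  have "\<tau> \<le> ereal (\<Sum>g\<in>D. w g * ln (B g / w g))"
    using bounds by (intro tendsto_upperbound[OF lim_sum] always_eventually allI log_ratio_sum_le) auto
  with \<open>\<tau> > -\<infinity>\<close> obtain T where T: "\<tau> = ereal T"
    by (cases \<tau>) auto
  have "eventually (\<lambda>k. ereal (T - 1) < log_ratio_sum w D (v k)) sequentially"
    using order_tendstoD(1)[OF lim_sum] T by simp
  then show C_pos: "\<forall>g\<in>{g\<in>D. 0 < w g}. 0 < C g"
    using limit_pos_of_log_ratio_sum_bounded_below[OF \<open>finite D\<close> _ _ bounds] lim by blast
  have "(\<lambda>k. log_ratio_sum w D (v k)) \<longlonglongrightarrow> ereal (\<Sum>g\<in>{g\<in>D. 0 < w g}. w g * ln (C g / w g))"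
    using \<open>finite D\<close> bounds lim C_pos by (intro tendsto_log_ratio_sum) auto
  with lim_sum show "\<tau> = ereal (\<Sum>g\<in>{g\<in>D. 0 < w g}. w g * ln (C g / w g))"
    by (rule LIMSEQ_unique)
qed

lemma ln_ge_one_minus_inverse: "0 < (x::real) \<Longrightarrow> 1 - 1 / x \<le> ln x"
  using ln_le_minus_one[of "1 / x"] by (simp add: ln_div)

text \<open>The bound \<open>ln x \<ge> 1 - 1 / x\<close> turns the difference quotient at \<open>t = 0\<close> into a function
  of \<open>t\<close> that is continuous at \<open>0\<close>, with value \<open>\<Sum>i. w i * (a i - 1)\<close>.\<close>

lemma weighted_sum_le_of_log_sum_nonpos:
  fixes w a :: "'i \<Rightarrow> real"
  assumes "finite I" "\<forall>i\<in>I. 0 \<le> w i" "\<forall>i\<in>I. 0 \<le> a i"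
    and nonpos: "\<And>t. 0 < t \<Longrightarrow> t < 1 \<Longrightarrow> (\<Sum>i\<in>I. w i * ln (1 + t * (a i - 1))) \<le> 0"
  shows "(\<Sum>i\<in>I. w i * a i) \<le> (\<Sum>i\<in>I. w i)"
proof -
  define h where "h t = (\<Sum>i\<in>I. w i * ((a i - 1) / (1 + t * (a i - 1))))" for t :: real
  have "h t \<le> 0" if t: "0 < t" "t < 1" for t
  proof -
    have pos: "0 < 1 + t * (a i - 1)" if "i \<in> I" for i
    proof -
      have "0 \<le> t * a i" using t assms(3) that by simp
      then show ?thesis using t by (simp add: algebra_simps)
    qed
    have "t * h t = (\<Sum>i\<in>I. w i * (1 - 1 / (1 + t * (a i - 1))))"
      unfolding h_def sum_distrib_left
    proof (rule sum.cong)
      fix i assume "i \<in> I"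
      then have "1 + t * (a i - 1) \<noteq> 0" using pos by (metis less_irrefl)
      then show "t * (w i * ((a i - 1) / (1 + t * (a i - 1)))) = w i * (1 - 1 / (1 + t * (a i - 1)))"
        by (simp add: field_simps)
    qed simp
    also have "\<dots> \<le> (\<Sum>i\<in>I. w i * ln (1 + t * (a i - 1)))"
      using assms(2) pos by (intro sum_mono mult_left_mono ln_ge_one_minus_inverse) auto
    also have "\<dots> \<le> 0" using nonpos t .
    finally show ?thesis using t by (simp add: mult_le_0_iff)
  qed
  then have "eventually (\<lambda>t. h t \<le> 0) (at_right 0)"
    by (auto simp: eventually_at_right_field intro: exI[of _ 1])
  moreover have "(h \<longlongrightarrow> h 0) (at_right 0)"
    unfolding h_def by (intro tendsto_intros) auto
  ultimately have "h 0 \<le> 0"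
    by (intro tendsto_upperbound) auto
  then show ?thesis
    by (simp add: h_def algebra_simps sum_subtractf)
qed

lemma ln_convex_combination_div:
  fixes C w x t :: real
  assumes "0 < C" "0 < w" "0 \<le> x" "0 < t" "t < 1"
  shows "ln (((1 - t) * C + t * x) / w) = ln (C / w) + ln (1 + t * (x / C - 1))"
proof -
  have split: "((1 - t) * C + t * x) / w = C / w * (1 + t * (x / C - 1))"
    using assms by (simp add: field_simps)
  have "0 \<le> t * (x / C)"
    using assms by simp
  then have "0 < 1 + t * (x / C - 1)"
    using assms(5) by (simp add: algebra_simps)
  then show ?thesis
    unfolding split using assms by (intro ln_mult_pos) auto
qed

lemma MC_ratio_sum_le_of_log_sum_maximal:
  fixes f :: "'i \<Rightarrow> ('a::topological_space \<Rightarrow> real)"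
  assumes "finite I" and w: "\<forall>i\<in>I. 0 < w i" and f: "\<forall>i\<in>I. f i \<in> CX \<and> (\<forall>x. 0 \<le> f i x)"
    and ms: "\<forall>k. ms k \<in> MC" and lim: "\<forall>i\<in>I. (\<lambda>k. ms k (f i)) \<longlonglongrightarrow> C i" and C_pos: "\<forall>i\<in>I. 0 < C i"
    and maximal: "\<forall>m\<in>MC. (\<forall>i\<in>I. 0 < m (f i)) \<longrightarrow>
      (\<Sum>i\<in>I. w i * ln (m (f i) / w i)) \<le> (\<Sum>i\<in>I. w i * ln (C i / w i))"
    and m: "m \<in> MC"
  shows "(\<Sum>i\<in>I. w i * m (f i) / C i) \<le> (\<Sum>i\<in>I. w i)"
proof -
  have mf: "0 \<le> m (f i)" if "i \<in> I" for i
    using MC_nonneg m f that by blast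
  have "(\<Sum>i\<in>I. w i * ln (1 + t * (m (f i) / C i - 1))) \<le> 0" if t: "0 < t" "t < 1" for t
  proof -
    define mt where "mt k = (\<lambda>h. (1 - t) * ms k h + t * m h)" for k
    have "eventually (\<lambda>k. \<forall>i\<in>I. 0 < ms k (f i)) sequentially"
      using assms(1) lim C_pos by (intro eventually_ball_finite) (auto intro: order_tendstoD)
    then have "eventually (\<lambda>k. (\<Sum>i\<in>I. w i * ln (mt k (f i) / w i))
        \<le> (\<Sum>i\<in>I. w i * ln (C i / w i))) sequentially"
    proof eventually_elim
      case (elim k)
      have "mt k \<in> MC"
        unfolding mt_def using ms m t by (intro MC_convex_combination) auto
      moreover have "\<forall>i\<in>I. 0 < mt k (f i)"
        unfolding mt_def using elim mf t by (simp add: add_pos_nonneg)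
      ultimately show ?case using maximal by blast
    qed
    moreover have "(\<lambda>k. \<Sum>i\<in>I. w i * ln (mt k (f i) / w i))
        \<longlonglongrightarrow> (\<Sum>i\<in>I. w i * ln (((1 - t) * C i + t * m (f i)) / w i))"
    proof -
      have "\<forall>i\<in>I. 0 < (1 - t) * C i + t * m (f i)"
        using C_pos mf t by (simp add: add_pos_nonneg)
      then show ?thesis
        unfolding mt_def using lim w by (intro tendsto_intros) auto
    qed
    ultimately have "(\<Sum>i\<in>I. w i * ln (((1 - t) * C i + t * m (f i)) / w i))
        \<le> (\<Sum>i\<in>I. w i * ln (C i / w i))"
      by (intro tendsto_upperbound) auto
    also have "(\<Sum>i\<in>I. w i * ln (((1 - t) * C i + t * m (f i)) / w i))
        = (\<Sum>i\<in>I. w i * ln (C i / w i)) + (\<Sum>i\<in>I. w i * ln (1 + t * (m (f i) / C i - 1)))"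
      unfolding sum.distrib[symmetric] using C_pos w mf t
      by (intro sum.cong) (simp_all add: ln_convex_combination_div distrib_left)
    finally show ?thesis by simp
  qed
  then have "(\<Sum>i\<in>I. w i * (m (f i) / C i)) \<le> (\<Sum>i\<in>I. w i)"
    using assms(1) w C_pos mf by (intro weighted_sum_le_of_log_sum_nonpos) auto
  then show ?thesis by simp
qed

theorem SUP_MC_ratio_sum_of_log_ratio_maximizing:
  fixes f :: "'i \<Rightarrow> ('a::topological_space \<Rightarrow> real)" and w :: "'i \<Rightarrow> real" and D :: "'i set"
  defines "\<tau> \<equiv> (SUP m\<in>MC. log_ratio_sum w D (\<lambda>g. m (f g)))"
  assumes compact: "compact (UNIV :: 'a set)" and "finite D" and w_nonneg: "\<forall>g\<in>D. 0 \<le> w g"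
    and f: "\<forall>g\<in>D. f g \<in> CX \<and> (\<forall>x. 0 \<le> f g x)"
    and ms: "\<forall>k. ms k \<in> MC"
    and maximizing: "(\<lambda>k. log_ratio_sum w D (\<lambda>g. ms k (f g))) \<longlonglongrightarrow> \<tau>"
    and lim: "\<forall>g\<in>D. (\<lambda>k. ms k (f g)) \<longlonglongrightarrow> C g"
    and "\<tau> > -\<infinity>"
  shows "(SUP m\<in>MC. ereal (\<Sum>g\<in>{g\<in>D. 0 < w g}. w g * m (f g) / C g))
    = ereal (\<Sum>g\<in>{g\<in>D. 0 < w g}. w g)"
proof -
  let ?Dp = "{g\<in>D. 0 < w g}"
  obtain B where "\<forall>g\<in>D. \<forall>m\<in>MC. 0 \<le> m (f g) \<and> m (f g) \<le> B g"
    using MC_values_bounded[OF compact \<open>finite D\<close> f] by blast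
  then have bounds: "\<forall>k. \<forall>g\<in>D. 0 \<le> w g \<and> 0 \<le> ms k (f g) \<and> ms k (f g) \<le> B g"
    using w_nonneg ms by blast
  note limits = tendsto_log_ratio_sum_real_limit[OF \<open>finite D\<close> bounds maximizing \<open>\<tau> > -\<infinity>\<close> lim]
  have maximal: "(\<Sum>g\<in>?Dp. w g * ln (m (f g) / w g)) \<le> (\<Sum>g\<in>?Dp. w g * ln (C g / w g))"
    if "m \<in> MC" "\<forall>g\<in>?Dp. 0 < m (f g)" for m
  proof -
    have "ereal (\<Sum>g\<in>?Dp. w g * ln (m (f g) / w g)) = log_ratio_sum w D (\<lambda>g. m (f g))"
      using \<open>finite D\<close> w_nonneg that(2) by (intro log_ratio_sum_eq_real[symmetric]) auto
    also have "\<dots> \<le> \<tau>"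
      unfolding \<tau>_def using that(1) by (rule SUP_upper)
    finally show ?thesis using limits(2) by simp
  qed
  have upper: "(\<Sum>g\<in>?Dp. w g * m (f g) / C g) \<le> (\<Sum>g\<in>?Dp. w g)" if "m \<in> MC" for m
    using \<open>finite D\<close> f ms lim limits(1) maximal that
    by (intro MC_ratio_sum_le_of_log_sum_maximal[where ms = ms]) auto
  have "(\<lambda>k. \<Sum>g\<in>?Dp. w g * ms k (f g) / C g) \<longlonglongrightarrow> (\<Sum>g\<in>?Dp. w g * C g / C g)"
    using lim limits(1) by (intro tendsto_intros) auto
  also have "(\<Sum>g\<in>?Dp. w g * C g / C g) = (\<Sum>g\<in>?Dp. w g)"
    using limits(1) by (intro sum.cong) auto
  finally have lower: "ereal (\<Sum>g\<in>?Dp. w g) \<le> (SUP m\<in>MC. ereal (\<Sum>g\<in>?Dp. w g * m (f g) / C g))"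
    by (rule tendsto_upperbound[OF tendsto_ereal]) (use ms in \<open>auto intro!: always_eventually SUP_upper\<close>)
  from upper lower show ?thesis
    by (intro antisym SUP_least) auto
qed

theorem lemma1p13:
  fixes \<alpha> :: "'a::t2_space \<Rightarrow> 'a"
    and A :: "('a \<Rightarrow> real) \<Rightarrow> ('a \<Rightarrow> real)"
    and \<mu> :: "('a \<Rightarrow> real) \<Rightarrow> real"
    and n :: nat
    and D :: "('a \<Rightarrow> real) set"
    and ms :: "nat \<Rightarrow> (('a \<Rightarrow> real) \<Rightarrow> real)"
    and r :: "nat \<Rightarrow> nat"
    and Cn :: "('a \<Rightarrow> real) \<Rightarrow> real"
  assumes "compact (UNIV :: 'a set)"
    and "continuous_on UNIV \<alpha>"
    and "transfer_operator \<alpha> A"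
    and "\<mu> \<in> MC_delta \<alpha>"
    and "partition_of_unity D"
    and "\<forall>k. ms k \<in> MC"
    and "(\<lambda>k. tau_sum A n \<mu> D (ms k)) \<longlonglongrightarrow> tau A n \<mu> D"
    and "strict_mono r"
    and "\<forall>g\<in>D. (\<lambda>i. ms (r i) ((A ^^ n) g)) \<longlonglongrightarrow> Cn g"
    and "tau A n \<mu> D > -\<infinity>"
  shows "(SUP m\<in>MC. ereal (\<Sum>g\<in>{g\<in>D. \<mu> g > 0}. \<mu> g * m ((A ^^ n) g) / Cn g)) = 1"
proof -
  have \<mu>: "\<mu> \<in> MC"
    using assms(4) by (simp add: MC_delta_def)
  have D: "finite D" "\<forall>g\<in>D. g \<in> CX \<and> (\<forall>x. 0 \<le> g x)"
    using assms(5) by (auto simp: partition_of_unity_def)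
  have \<mu>_nonneg: "\<forall>g\<in>D. 0 \<le> \<mu> g"
    using D MC_nonneg[OF \<mu>] by blast
  have "(\<Sum>g\<in>{g\<in>D. 0 < \<mu> g}. \<mu> g) = (\<Sum>g\<in>D. \<mu> g)"
    using D \<mu>_nonneg by (intro sum.mono_neutral_left) (auto simp: order.order_iff_strict)
  also have "\<dots> = 1"
    using MC_sum_partition_of_unity[OF \<mu> assms(5)] .
  finally have sum_one: "(\<Sum>g\<in>{g\<in>D. 0 < \<mu> g}. \<mu> g) = 1" .
  have "(\<lambda>i. tau_sum A n \<mu> D (ms (r i))) \<longlonglongrightarrow> tau A n \<mu> D"
    using LIMSEQ_subseq_LIMSEQ[OF assms(7,8)] by (simp add: comp_def)
  with assms(1,3,6,9,10) D \<mu>_nonneg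
  have "(SUP m\<in>MC. ereal (\<Sum>g\<in>{g\<in>D. 0 < \<mu> g}. \<mu> g * m ((A ^^ n) g) / Cn g))
      = ereal (\<Sum>g\<in>{g\<in>D. 0 < \<mu> g}. \<mu> g)"
    unfolding tau_def tau_sum_eq_log_ratio_sum
    by (intro SUP_MC_ratio_sum_of_log_ratio_maximizing[where ms = "ms \<circ> r"])
       (auto simp: transfer_operator_funpow)
  then show ?thesis
    using sum_one by simp
qed

end
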